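(* Let $(\mathsf G_n,u_n)$ be a sequence of random finite connected graphs with a distinguished vertex $u_n$. Conditionally on $(\mathsf G_n,u_n)$, let $v_n$ be a vertex of $\mathsf G_n$ chosen either uniformly at random or according to the stationary distribution (probability proportional to the degree). Suppose that $(\mathsf G_n,v_n)$ converges in distribution in the local topology and that the number $|\mathsf G_n|$ of vertices satisfies $|\mathsf G_n|\to\infty$ in distribution. Then the graph distance satisfies $d_{\mathsf G_n}(v_n,u_n)\to\infty$ in distribution.
   Context: Local topology: on the space of root-preserving isomorphism classes of rooted, connected, locally finite graphs, given by $d_{\mathrm{loc}}(G^\bullet,H^\bullet)=1/(1+\sup\{k: U_k(G^\bullet)=U_k(H^\bullet)\})$, $U_k$ the rooted radius-$k$ neighbourhood of the root. The same statement holds for planar maps. *)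

theory Defs
  imports "HOL-Probability.Probability"
begin

text \<open>A (simple) graph: a vertex set of natural numbers and an edge predicate.
  Every countable graph (in particular every finite or locally finite connected
  graph) is isomorphic to one of this form.\<close>

record graph =
  verts :: "nat set"
  edges :: "nat \<Rightarrow> nat \<Rightarrow> bool"

type_synonym rgraph = "graph \<times> nat"

definition wf_graph :: "graph \<Rightarrow> bool" where
  "wf_graph G \<longleftrightarrow>
     (\<forall>x y. edges G x y \<longrightarrow> x \<in> verts G \<and> y \<in> verts G) \<and>
     (\<forall>x y. edges G x y \<longrightarrow> edges G y x) \<and>
     (\<forall>x. \<not> edges G x x)"

definition adj :: "graph \<Rightarrow> (nat \<times> nat) set" where
  "adj G = {(x, y). x \<in> verts G \<and> y \<in> verts G \<and> edges G x y}"

definition connected_graph :: "graph \<Rightarrow> bool" where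
  "connected_graph G \<longleftrightarrow> (\<forall>x\<in>verts G. \<forall>y\<in>verts G. (x, y) \<in> (adj G)\<^sup>*)"

definition degree :: "graph \<Rightarrow> nat \<Rightarrow> nat" where
  "degree G v = card {w \<in> verts G. edges G v w}"

definition locally_finite :: "graph \<Rightarrow> bool" where
  "locally_finite G \<longleftrightarrow> (\<forall>v\<in>verts G. finite {w \<in> verts G. edges G v w})"

definition gdist :: "graph \<Rightarrow> nat \<Rightarrow> nat \<Rightarrow> nat" where
  "gdist G x y = (LEAST k. (x, y) \<in> (adj G) ^^ k)"

definition finite_conn_graph :: "graph \<Rightarrow> bool" where
  "finite_conn_graph G \<longleftrightarrow> wf_graph G \<and> finite (verts G) \<and> verts G \<noteq> {} \<and> connected_graph G"

definition RG :: "rgraph set" where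
  "RG = {(G, r). wf_graph G \<and> r \<in> verts G \<and> locally_finite G \<and> connected_graph G}"

definition rooted_iso :: "rgraph \<Rightarrow> rgraph \<Rightarrow> bool" where
  "rooted_iso A B \<longleftrightarrow>
     (\<exists>f. bij_betw f (verts (fst A)) (verts (fst B)) \<and> f (snd A) = snd B \<and>
          (\<forall>x\<in>verts (fst A). \<forall>y\<in>verts (fst A).
              edges (fst A) x y \<longleftrightarrow> edges (fst B) (f x) (f y)))"

definition loc_ball :: "nat \<Rightarrow> rgraph \<Rightarrow> rgraph" where
  "loc_ball k A =
     (let G = fst A; r = snd A;
          B = {y \<in> verts G. \<exists>j\<le>k. (r, y) \<in> (adj G) ^^ j}
      in (\<lparr>verts = B, edges = (\<lambda>x y. edges G x y \<and> x \<in> B \<and> y \<in> B)\<rparr>, r))"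

definition agree_radii :: "rgraph \<Rightarrow> rgraph \<Rightarrow> nat set" where
  "agree_radii A B = {k. rooted_iso (loc_ball k A) (loc_ball k B)}"

definition dloc :: "rgraph \<Rightarrow> rgraph \<Rightarrow> real" where
  "dloc A B = (if finite (agree_radii A B)
               then 1 / (1 + real (Max (agree_radii A B))) else 0)"

definition loc_open :: "rgraph set \<Rightarrow> bool" where
  "loc_open U \<longleftrightarrow> U \<subseteq> RG \<and> (\<forall>x\<in>U. \<exists>e>0. \<forall>y\<in>RG. dloc x y < e \<longrightarrow> y \<in> U)"

definition loc_continuous :: "(rgraph \<Rightarrow> real) \<Rightarrow> bool" where
  "loc_continuous f \<longleftrightarrow>
     (\<forall>x\<in>RG. \<forall>e>0. \<exists>d>0. \<forall>y\<in>RG. dloc x y < d \<longrightarrow> \<bar>f y - f x\<bar> < e)"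

definition loc_bounded :: "(rgraph \<Rightarrow> real) \<Rightarrow> bool" where
  "loc_bounded f \<longleftrightarrow> (\<exists>B. \<forall>x\<in>RG. \<bar>f x\<bar> \<le> B)"

definition local_conv_dist :: "(nat \<Rightarrow> rgraph pmf) \<Rightarrow> bool" where
  "local_conv_dist P \<longleftrightarrow>
     (\<exists>\<mu>. prob_space \<mu> \<and> space \<mu> = RG \<and> sets \<mu> = sigma_sets RG {U. loc_open U} \<and>
          (\<forall>f. loc_continuous f \<and> loc_bounded f \<longrightarrow>
               (\<lambda>n. measure_pmf.expectation (P n) f) \<longlonglongrightarrow> integral\<^sup>L \<mu> f))"

definition uniform_vertex :: "graph \<Rightarrow> nat pmf" where
  "uniform_vertex G = pmf_of_set (verts G)"

text \<open>If the total degree is 0 (for a connected graph: a single vertex) the distribution is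
  the point mass at that vertex, which coincides with the uniform one.\<close>
definition stationary_vertex :: "graph \<Rightarrow> nat pmf" where
  "stationary_vertex G =
     (let tot = (\<Sum>w\<in>verts G. degree G w) in
      if tot = 0 then pmf_of_set (verts G)
      else embed_pmf (\<lambda>v. if v \<in> verts G then real (degree G v) / real tot else 0))"

end

theory Submission
  imports Defs
begin

text \<open>Fix \<open>K\<close>. If \<open>d(v, u) \<le> K\<close>, then the ball of radius \<open>2K+1\<close> around \<open>v\<close>
  contains the ball \<open>B\<close> of radius \<open>K+1\<close> around \<open>u\<close>, and \<open>B\<close> contains every neighbour of
  every vertex of the \<open>K\<close>-ball around \<open>u\<close>. Hence either all vertices near \<open>u\<close> see a
  \<open>(2K+1)\<close>-ball of size at least \<open>M\<close>, or \<open>|B| < M\<close> and then, since the uniform and the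
  stationary law put mass at most \<open>max(1, deg a)/|G|\<close> on a vertex \<open>a\<close>, the \<open>K\<close>-ball around
  \<open>u\<close> has mass at most \<open>M\<^sup>2/|G|\<close>. Local convergence makes the size of the \<open>(2K+1)\<close>-ball
  around \<open>v\<^sub>n\<close> tight, and \<open>|G\<^sub>n| \<rightarrow> \<infinity>\<close> makes \<open>M\<^sup>2/|G\<^sub>n|\<close> small.\<close>

section \<open>Balls\<close>

definition ball_verts :: "graph \<Rightarrow> nat \<Rightarrow> nat \<Rightarrow> nat set" where
  "ball_verts G r R = {y \<in> verts G. \<exists>j\<le>R. (r, y) \<in> adj G ^^ j}"

lemma loc_ball_simps:
  "verts (fst (loc_ball R A)) = ball_verts (fst A) (snd A) R"
  "snd (loc_ball R A) = snd A"
  "edges (fst (loc_ball R A)) x y \<longleftrightarrow>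
     edges (fst A) x y \<and> x \<in> ball_verts (fst A) (snd A) R \<and> y \<in> ball_verts (fst A) (snd A) R"
  by (simp_all add: loc_ball_def ball_verts_def Let_def)

lemma root_in_ball_verts: "r \<in> verts G \<Longrightarrow> r \<in> ball_verts G r R"
  by (auto simp: ball_verts_def intro!: exI[of _ 0])

lemma ball_verts_0: "r \<in> verts G \<Longrightarrow> ball_verts G r 0 = {r}"
  by (auto simp: ball_verts_def)

lemma relpow_mono:
  fixes A B :: "('a \<times> 'a) set"
  assumes "A \<subseteq> B"
  shows "A ^^ n \<subseteq> B ^^ n"
proof (induction n)
  case 0
  then show ?case by simp
next
  case (Suc n)
  then show ?case
    using relcomp_mono[OF Suc.IH assms] by simp
qed

lemma relpow_adj_sym:
  assumes "wf_graph G" "(x, y) \<in> adj G ^^ n"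
  shows "(y, x) \<in> adj G ^^ n"
  using assms(2)
proof (induction n arbitrary: y)
  case 0
  then show ?case by simp
next
  case (Suc n)
  then obtain z where z: "(x, z) \<in> adj G ^^ n" "(z, y) \<in> adj G"
    by auto
  have "(y, z) \<in> adj G"
    using z(2) assms(1) by (auto simp: adj_def wf_graph_def)
  with Suc.IH[OF z(1)] show ?case
    by (meson relpow_Suc_I2)
qed

lemma ball_verts_subset_shift:
  assumes "wf_graph G" "a \<in> ball_verts G u j"
  shows "ball_verts G u R \<subseteq> ball_verts G a (j + R)"
proof
  fix y assume "y \<in> ball_verts G u R"
  then obtain i where i: "i \<le> R" "(u, y) \<in> adj G ^^ i" "y \<in> verts G"
    by (auto simp: ball_verts_def)
  obtain k where k: "k \<le> j" "(u, a) \<in> adj G ^^ k"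
    using assms(2) by (auto simp: ball_verts_def)
  have "(a, y) \<in> adj G ^^ (k + i)"
    using relpow_adj_sym[OF assms(1) k(2)] i(2) by (auto simp: relpow_add)
  then show "y \<in> ball_verts G a (j + R)"
    using i k by (auto simp: ball_verts_def intro!: exI[of _ "k + i"])
qed

lemma neighbours_subset_ball_verts:
  assumes "wf_graph G" "a \<in> ball_verts G u R"
  shows "{w \<in> verts G. edges G a w} \<subseteq> ball_verts G u (Suc R)"
proof
  fix w assume w: "w \<in> {w \<in> verts G. edges G a w}"
  obtain k where k: "k \<le> R" "(u, a) \<in> adj G ^^ k"
    using assms(2) by (auto simp: ball_verts_def)
  have "(a, w) \<in> adj G"
    using w assms(1) by (auto simp: adj_def wf_graph_def)
  with k show "w \<in> ball_verts G u (Suc R)"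
    using w by (auto simp: ball_verts_def intro!: exI[of _ "Suc k"])
qed

lemma card_ball_verts_le_shift:
  assumes "wf_graph G" "finite (verts G)" "a \<in> ball_verts G u j"
  shows "card (ball_verts G u R) \<le> card (ball_verts G a (j + R))"
  using ball_verts_subset_shift[OF assms(1,3)] assms(2)
  by (intro card_mono) (auto simp: ball_verts_def)

lemma degree_le_card_ball_verts:
  assumes "wf_graph G" "finite (verts G)" "a \<in> ball_verts G u R"
  shows "degree G a \<le> card (ball_verts G u (Suc R))"
  unfolding degree_def using neighbours_subset_ball_verts[OF assms(1,3)] assms(2)
  by (intro card_mono) (auto simp: ball_verts_def)

lemma gdist_relpow:
  assumes "connected_graph G" "v \<in> verts G" "u \<in> verts G"
  shows "(v, u) \<in> adj G ^^ gdist G v u"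
proof -
  have "(v, u) \<in> (adj G)\<^sup>*"
    using assms unfolding connected_graph_def by blast
  then obtain n where "(v, u) \<in> adj G ^^ n"
    using rtrancl_power by blast
  then show ?thesis
    unfolding gdist_def by (rule LeastI)
qed

lemma in_ball_verts_gdist:
  assumes "wf_graph G" "connected_graph G" "v \<in> verts G" "u \<in> verts G" "gdist G v u \<le> R"
  shows "v \<in> ball_verts G u R"
  using relpow_adj_sym[OF assms(1) gdist_relpow[OF assms(2-4)]] assms(3,5)
  by (auto simp: ball_verts_def)

lemma relpow_adj_loc_ball:
  assumes "j \<le> k" "(r, y) \<in> adj G ^^ j"
  shows "(r, y) \<in> adj (fst (loc_ball k (G, r))) ^^ j"
  using assms
proof (induction j arbitrary: y)
  case 0
  then show ?case by simp
next
  case (Suc j)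
  then obtain z where z: "(r, z) \<in> adj G ^^ j" "(z, y) \<in> adj G"
    by auto
  have "z \<in> ball_verts G r k"
    using z Suc.prems(1) by (auto simp: ball_verts_def adj_def intro!: exI[of _ j])
  moreover have "y \<in> ball_verts G r k"
    using relpow_Suc_I[OF z] z(2) Suc.prems(1) unfolding ball_verts_def adj_def by blast
  ultimately have "(z, y) \<in> adj (fst (loc_ball k (G, r)))"
    using z(2) by (auto simp: adj_def loc_ball_simps)
  with Suc z show ?case
    by (meson Suc_leD relpow_Suc_I)
qed

lemma ball_verts_loc_ball:
  assumes "R \<le> k"
  shows "ball_verts (fst (loc_ball k (G, r))) r R = ball_verts G r R"
proof
  let ?H = "fst (loc_ball k (G, r))"
  have "adj ?H \<subseteq> adj G"
    by (auto simp: adj_def loc_ball_simps ball_verts_def)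
  then have "adj ?H ^^ j \<subseteq> adj G ^^ j" for j
    by (rule relpow_mono)
  moreover have "verts ?H \<subseteq> verts G"
    by (auto simp: loc_ball_simps ball_verts_def)
  ultimately show "ball_verts ?H r R \<subseteq> ball_verts G r R"
    unfolding ball_verts_def by auto
  show "ball_verts G r R \<subseteq> ball_verts ?H r R"
  proof
    fix y assume "y \<in> ball_verts G r R"
    then obtain j where j: "j \<le> R" "(r, y) \<in> adj G ^^ j" "y \<in> verts G"
      by (auto simp: ball_verts_def)
    then have "y \<in> verts ?H"
      using assms by (auto simp: loc_ball_simps ball_verts_def intro: le_trans)
    with j assms show "y \<in> ball_verts ?H r R"
      unfolding ball_verts_def using relpow_adj_loc_ball[of j k r y G] by auto
  qed
qed

section \<open>Ball sizes in the local topology\<close>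

lemma rooted_iso_relpow_adj:
  assumes bij: "bij_betw f (verts G) (verts H)"
    and edges: "\<forall>x\<in>verts G. \<forall>y\<in>verts G. edges G x y \<longleftrightarrow> edges H (f x) (f y)"
    and r: "r \<in> verts G" and y: "y \<in> verts G"
  shows "(r, y) \<in> adj G ^^ j \<longleftrightarrow> (f r, f y) \<in> adj H ^^ j"
  using y
proof (induction j arbitrary: y)
  case 0
  then show ?case
    using bij r by (auto simp: bij_betw_def inj_on_def)
next
  case (Suc j)
  have step: "(z, y) \<in> adj G \<longleftrightarrow> (f z, f y) \<in> adj H" if "z \<in> verts G" for z
    using that Suc.prems edges bij by (auto simp: adj_def bij_betw_def)
  show ?case
  proof
    assume "(r, y) \<in> adj G ^^ Suc j"
    then obtain z where "(r, z) \<in> adj G ^^ j" "(z, y) \<in> adj G"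
      by auto
    moreover have "z \<in> verts G"
      using \<open>(z, y) \<in> adj G\<close> by (auto simp: adj_def)
    ultimately show "(f r, f y) \<in> adj H ^^ Suc j"
      using Suc.IH step by (meson relpow_Suc_I)
  next
    assume "(f r, f y) \<in> adj H ^^ Suc j"
    then obtain w where w: "(f r, w) \<in> adj H ^^ j" "(w, f y) \<in> adj H"
      by auto
    then obtain z where "z \<in> verts G" "w = f z"
      using bij by (auto simp: adj_def bij_betw_def)
    with w show "(r, y) \<in> adj G ^^ Suc j"
      using Suc.IH step by (meson relpow_Suc_I)
  qed
qed

lemma card_ball_verts_rooted_iso:
  assumes "rooted_iso (G, r) (H, s)" "r \<in> verts G"
  shows "card (ball_verts G r R) = card (ball_verts H s R)"
proof -
  obtain f where bij: "bij_betw f (verts G) (verts H)" and root: "f r = s"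
    and edges: "\<forall>x\<in>verts G. \<forall>y\<in>verts G. edges G x y \<longleftrightarrow> edges H (f x) (f y)"
    using assms(1) unfolding rooted_iso_def by auto
  note paths = rooted_iso_relpow_adj[OF bij edges assms(2)]
  have "f ` ball_verts G r R = ball_verts H s R"
  proof
    show "f ` ball_verts G r R \<subseteq> ball_verts H s R"
      using paths bij root unfolding ball_verts_def bij_betw_def by auto
    show "ball_verts H s R \<subseteq> f ` ball_verts G r R"
    proof
      fix y assume y: "y \<in> ball_verts H s R"
      then obtain x where "x \<in> verts G" "y = f x"
        using bij by (auto simp: ball_verts_def bij_betw_def)
      with y paths root show "y \<in> f ` ball_verts G r R"
        unfolding ball_verts_def by auto
    qed
  qed
  moreover have "inj_on f (ball_verts G r R)"
    using bij by (auto simp: ball_verts_def bij_betw_def intro: inj_on_subset)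
  ultimately show ?thesis
    by (metis card_image)
qed

lemma zero_in_agree_radii:
  assumes "A \<in> RG" "B \<in> RG"
  shows "0 \<in> agree_radii A B"
proof -
  obtain G r H s where AB: "A = (G, r)" "B = (H, s)"
    by fastforce
  have "r \<in> verts G" "s \<in> verts H" "wf_graph G" "wf_graph H"
    using assms AB by (auto simp: RG_def)
  then have "rooted_iso (loc_ball 0 (G, r)) (loc_ball 0 (H, s))"
    unfolding rooted_iso_def
    by (intro exI[of _ "\<lambda>_. s"]) (auto simp: loc_ball_simps ball_verts_0 bij_betw_def wf_graph_def)
  then show ?thesis
    using AB by (simp add: agree_radii_def)
qed

lemma agree_radii_unbounded_if_dloc_less:
  assumes "A \<in> RG" "B \<in> RG" "dloc A B < 1 / (1 + real R)"
  obtains k where "R \<le> k" "k \<in> agree_radii A B"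
proof (cases "finite (agree_radii A B)")
  case True
  let ?m = "Max (agree_radii A B)"
  have "1 / (1 + real ?m) < 1 / (1 + real R)"
    using assms(3) True by (simp add: dloc_def)
  then have "R < ?m"
    by (smt (verit) frac_le of_nat_0_le_iff of_nat_less_iff)
  moreover have "?m \<in> agree_radii A B"
    using True zero_in_agree_radii[OF assms(1,2)] by (intro Max_in) auto
  ultimately show ?thesis
    using that less_imp_le by blast
next
  case False
  then show ?thesis
    using that by (meson infinite_nat_iff_unbounded_le)
qed

lemma card_ball_verts_eq_if_dloc_less:
  assumes "(G, r) \<in> RG" "(H, s) \<in> RG" "dloc (G, r) (H, s) < 1 / (1 + real R)"
  shows "card (ball_verts G r R) = card (ball_verts H s R)"
proof -
  obtain k where k: "R \<le> k" "rooted_iso (loc_ball k (G, r)) (loc_ball k (H, s))"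
    using agree_radii_unbounded_if_dloc_less[OF assms] by (auto simp: agree_radii_def)
  have r: "r \<in> verts G"
    using assms by (auto simp: RG_def)
  have "rooted_iso (fst (loc_ball k (G, r)), r) (fst (loc_ball k (H, s)), s)"
    using k(2) by (simp add: loc_ball_def Let_def)
  then have "card (ball_verts (fst (loc_ball k (G, r))) r R) = card (ball_verts (fst (loc_ball k (H, s))) s R)"
    by (rule card_ball_verts_rooted_iso) (simp add: loc_ball_simps root_in_ball_verts r)
  then show ?thesis
    by (simp add: ball_verts_loc_ball k(1))
qed

definition ball_card_ge :: "nat \<Rightarrow> nat \<Rightarrow> rgraph set" where
  "ball_card_ge R M = {A \<in> RG. M \<le> card (ball_verts (fst A) (snd A) R)}"

lemma ball_card_ge_iff_if_dloc_less:
  assumes "A \<in> RG" "B \<in> RG" "dloc A B < 1 / (1 + real R)"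
  shows "A \<in> ball_card_ge R M \<longleftrightarrow> B \<in> ball_card_ge R M"
  using assms card_ball_verts_eq_if_dloc_less[of "fst A" "snd A" "fst B" "snd B" R]
  by (simp add: ball_card_ge_def)

lemma loc_open_ball_card_ge: "loc_open (ball_card_ge R M)"
  unfolding loc_open_def
proof (intro conjI ballI)
  show "ball_card_ge R M \<subseteq> RG"
    by (auto simp: ball_card_ge_def)
  fix A assume "A \<in> ball_card_ge R M"
  then show "\<exists>e>0. \<forall>B\<in>RG. dloc A B < e \<longrightarrow> B \<in> ball_card_ge R M"
    using ball_card_ge_iff_if_dloc_less
    by (intro exI[of _ "1 / (1 + real R)"]) (auto simp: ball_card_ge_def)
qed

lemma loc_continuous_indicator_ball_card_ge:
  "loc_continuous (indicator (ball_card_ge R M))"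
  unfolding loc_continuous_def
proof (intro ballI allI impI)
  fix A :: rgraph and e :: real
  assume "A \<in> RG" "e > 0"
  then show "\<exists>d>0. \<forall>B\<in>RG. dloc A B < d \<longrightarrow>
      \<bar>indicator (ball_card_ge R M) B - indicator (ball_card_ge R M) A\<bar> < e"
    using ball_card_ge_iff_if_dloc_less[of A _ R M]
    by (intro exI[of _ "1 / (1 + real R)"]) (auto simp: indicator_def)
qed

lemma loc_bounded_indicator: "loc_bounded (indicator U)"
  unfolding loc_bounded_def by (intro exI[of _ 1]) (simp add: indicator_def)

text \<open>The limit law is a probability measure, so by continuity from above
  \<open>ball_card_ge R M\<close> has small limit measure for large \<open>M\<close>; its indicator is continuous and
  bounded, so this transfers to \<open>P n\<close> for large \<open>n\<close>.\<close>
lemma local_conv_dist_ball_card_tight: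
  assumes "local_conv_dist P" "e > 0"
  obtains M where "eventually (\<lambda>n. measure_pmf.prob (P n) (ball_card_ge R M) < e) sequentially"
proof -
  obtain \<mu> where \<mu>: "prob_space \<mu>" "space \<mu> = RG" "sets \<mu> = sigma_sets RG {U. loc_open U}"
    and conv: "\<And>f. loc_continuous f \<and> loc_bounded f \<Longrightarrow>
               (\<lambda>n. measure_pmf.expectation (P n) f) \<longlonglongrightarrow> integral\<^sup>L \<mu> f"
    using assms(1) unfolding local_conv_dist_def by blast
  interpret prob_space \<mu>
    by (rule \<mu>(1))
  have sets: "ball_card_ge R M \<in> sets \<mu>" for M
    using loc_open_ball_card_ge[of R M] \<mu>(3) by auto
  have "decseq (ball_card_ge R)"
    by (auto simp: decseq_def ball_card_ge_def)
  then have "(\<lambda>M. prob (ball_card_ge R M)) \<longlonglongrightarrow> prob (\<Inter>M. ball_card_ge R M)"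
    by (intro finite_Lim_measure_decseq) (auto simp: sets)
  moreover have "(\<Inter>M. ball_card_ge R M) = {}"
    by (auto simp: ball_card_ge_def) (meson Suc_n_not_le_n)
  ultimately have "eventually (\<lambda>M. prob (ball_card_ge R M) < e) sequentially"
    using assms(2) by (simp add: order_tendstoD(2))
  then obtain M where M: "prob (ball_card_ge R M) < e"
    by (auto simp: eventually_sequentially)
  have "(\<lambda>n. measure_pmf.prob (P n) (ball_card_ge R M)) \<longlonglongrightarrow> prob (ball_card_ge R M)"
    using conv[of "indicator (ball_card_ge R M)"] \<mu>(2)
      loc_continuous_indicator_ball_card_ge loc_bounded_indicator
    by (simp add: ball_card_ge_def Int_absorb2 subsetI)
  then show ?thesis
    using M that order_tendstoD(2) by blast
qed

section \<open>Degree-bounded laws of the second vertex\<close>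

text \<open>This bound is all the proof uses of the uniform and the stationary law; the
  \<open>max 1\<close> accounts for the one-vertex graph, where the stationary law is uniform.\<close>
definition degree_bounded_law :: "graph \<Rightarrow> nat pmf \<Rightarrow> bool" where
  "degree_bounded_law G p \<longleftrightarrow> set_pmf p \<subseteq> verts G \<and>
     (\<forall>a\<in>verts G. pmf p a \<le> real (max 1 (degree G a)) / real (card (verts G)))"

lemma degree_bounded_law_uniform_vertex:
  assumes "finite (verts G)" "verts G \<noteq> {}"
  shows "degree_bounded_law G (uniform_vertex G)"
  using assms
  by (auto simp: degree_bounded_law_def uniform_vertex_def intro!: divide_right_mono)

lemma degree_pos:
  assumes "finite_conn_graph G" "a \<in> verts G" "b \<in> verts G" "a \<noteq> b"
  shows "0 < degree G a"
proof -
  have "(a, b) \<in> (adj G)\<^sup>+"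
    using assms by (auto simp: finite_conn_graph_def connected_graph_def rtrancl_eq_or_trancl)
  then obtain w where "(a, w) \<in> adj G"
    by (meson tranclD)
  then have "w \<in> {w \<in> verts G. edges G a w}"
    by (simp add: adj_def)
  moreover have "finite {w \<in> verts G. edges G a w}"
    using assms(1) by (simp add: finite_conn_graph_def)
  ultimately show ?thesis
    unfolding degree_def using card_gt_0_iff by blast
qed

lemma pmf_stationary_vertex:
  assumes "finite (verts G)" and tot: "(\<Sum>w\<in>verts G. degree G w) = tot" "tot \<noteq> 0"
  shows "pmf (stationary_vertex G) a = (if a \<in> verts G then real (degree G a) / real tot else 0)"
proof -
  define f where "f = (\<lambda>v. if v \<in> verts G then real (degree G v) / real tot else 0)"
  have f_nonneg: "0 \<le> f x" for x
    by (simp add: f_def)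
  have "(\<integral>\<^sup>+x. ennreal (f x) \<partial>count_space UNIV) = (\<integral>\<^sup>+x. ennreal (f x) \<partial>count_space (verts G))"
    by (auto simp: nn_integral_count_space_indicator f_def indicator_def intro!: nn_integral_cong)
  also have "\<dots> = ennreal (\<Sum>x\<in>verts G. f x)"
    using assms(1) f_nonneg by (simp add: nn_integral_count_space_finite sum_ennreal)
  also have "(\<Sum>x\<in>verts G. f x) = 1"
    using tot by (simp add: f_def flip: sum_divide_distrib of_nat_sum)
  finally have "(\<integral>\<^sup>+x. ennreal (f x) \<partial>count_space UNIV) = 1"
    by simp
  then have "pmf (embed_pmf f) a = f a"
    using f_nonneg by (rule pmf_embed_pmf[rotated])
  then show ?thesis
    using tot by (simp add: stationary_vertex_def f_def)
qed

lemma degree_bounded_law_stationary_vertex: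
  assumes fc: "finite_conn_graph G"
  shows "degree_bounded_law G (stationary_vertex G)"
proof -
  define tot where "tot = (\<Sum>w\<in>verts G. degree G w)"
  have fin: "finite (verts G)"
    using fc by (simp add: finite_conn_graph_def)
  show ?thesis
  proof (cases "tot = 0")
    case True
    then show ?thesis
      using fc degree_bounded_law_uniform_vertex
      by (simp add: stationary_vertex_def uniform_vertex_def finite_conn_graph_def tot_def)
  next
    case False
    note pmf_eq = pmf_stationary_vertex[OF fin tot_def[symmetric] False]
    obtain w where w: "w \<in> verts G" "0 < degree G w"
      using False fin by (auto simp: tot_def sum_eq_0_iff)
    have "0 < degree G a" if "a \<in> verts G" for a
      using w degree_pos[OF fc that w(1)] by (cases "a = w") auto
    then have "(\<Sum>w\<in>verts G. 1) \<le> tot"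
      unfolding tot_def by (intro sum_mono) (simp add: Suc_le_eq)
    then have "card (verts G) \<le> tot"
      by simp
    then have "real (degree G a) / real tot \<le> real (max 1 (degree G a)) / real (card (verts G))"
      if "a \<in> verts G" for a
      using that fin by (intro frac_le) (auto simp: card_gt_0_iff)
    moreover have "set_pmf (stationary_vertex G) \<subseteq> verts G"
      using pmf_eq by (auto simp: set_pmf_iff split: if_splits)
    ultimately show ?thesis
      by (simp add: degree_bounded_law_def pmf_eq)
  qed
qed

lemma degree_bounded_law_sel:
  assumes "sel = uniform_vertex \<or> sel = stationary_vertex" "finite_conn_graph G"
  shows "degree_bounded_law G (sel G)"
  using assms degree_bounded_law_uniform_vertex degree_bounded_law_stationary_vertex
  by (auto simp: finite_conn_graph_def)

section \<open>Mass near the distinguished vertex\<close>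

lemma measure_pmf_mono_on_support:
  "A \<inter> set_pmf p \<subseteq> B \<Longrightarrow> measure_pmf.prob p A \<le> measure_pmf.prob p B"
  using measure_pmf.finite_measure_mono[of "A \<inter> set_pmf p" B p]
  by (simp add: measure_Int_set_pmf)

lemma measure_degree_bounded_law_le:
  assumes law: "degree_bounded_law G p"
    and B: "finite B" "A \<subseteq> B" "A \<subseteq> verts G" and deg: "\<And>a. a \<in> A \<Longrightarrow> degree G a \<le> card B"
  shows "measure_pmf.prob p A \<le> real (card B) ^ 2 / real (card (verts G))"
proof -
  have "finite A"
    using B finite_subset by blast
  have "pmf p a \<le> real (card B) / real (card (verts G))" if a: "a \<in> A" for a
  proof -
    have "0 < card B"
      using a B card_gt_0_iff by blast
    then have "real (max 1 (degree G a)) \<le> real (card B)"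
      using deg[OF a] by simp
    then have "real (max 1 (degree G a)) / real (card (verts G)) \<le> real (card B) / real (card (verts G))"
      by (simp add: divide_right_mono)
    moreover have "pmf p a \<le> real (max 1 (degree G a)) / real (card (verts G))"
      using law a B(3) unfolding degree_bounded_law_def by blast
    ultimately show ?thesis
      by linarith
  qed
  then have "(\<Sum>a\<in>A. pmf p a) \<le> (\<Sum>a\<in>A. real (card B) / real (card (verts G)))"
    by (rule sum_mono)
  then have "measure_pmf.prob p A \<le> real (card A) * (real (card B) / real (card (verts G)))"
    using \<open>finite A\<close> by (simp add: measure_measure_pmf_finite)
  also have "\<dots> \<le> real (card B) * (real (card B) / real (card (verts G)))"
    using card_mono[OF B(1,2)] by (intro mult_right_mono) auto
  finally show ?thesis
    by (simp add: power2_eq_square)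
qed

lemma measure_near_small_ball_le:
  assumes fc: "finite_conn_graph G" and u: "u \<in> verts G" and law: "degree_bounded_law G p"
  shows "measure_pmf.prob p {v. gdist G v u \<le> K \<and> card (ball_verts G v (2*K+1)) < M}
    \<le> real M ^ 2 / real (card (verts G))"
proof -
  let ?E = "{v. gdist G v u \<le> K \<and> card (ball_verts G v (2*K+1)) < M}"
  let ?A = "ball_verts G u K" and ?B = "ball_verts G u (Suc K)"
  have wf: "wf_graph G" and fin: "finite (verts G)"
    using fc by (auto simp: finite_conn_graph_def)
  have finB: "finite ?B"
    using fin by (simp add: ball_verts_def)
  have near: "?E \<inter> set_pmf p \<subseteq> {a \<in> ?A. card (ball_verts G a (2*K+1)) < M}"
    using law u fc in_ball_verts_gdist[OF wf] by (auto simp: degree_bounded_law_def finite_conn_graph_def)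
  have B_le: "card ?B \<le> card (ball_verts G a (2*K+1))" if "a \<in> ?A" for a
    using card_ball_verts_le_shift[OF wf fin that, of "Suc K"] by (simp add: mult_2)
  have "{a \<in> ?A. card (ball_verts G a (2*K+1)) < M} = {}" if "M \<le> card ?B"
    using B_le that by (auto simp: not_less intro: le_trans)
  then consider "{a \<in> ?A. card (ball_verts G a (2*K+1)) < M} = {}" | "card ?B < M"
    by linarith
  then show ?thesis
  proof cases
    case 1
    have "measure_pmf.prob p ?E \<le> measure_pmf.prob p {}"
      using measure_pmf_mono_on_support[OF near] unfolding 1 .
    moreover have "0 \<le> real M ^ 2 / real (card (verts G))"
      by simp
    ultimately show ?thesis
      using measure_empty[of "measure_pmf p"] by linarith
  next
    case 2
    have "measure_pmf.prob p ?A \<le> real (card ?B) ^ 2 / real (card (verts G))"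
      using degree_le_card_ball_verts[OF wf fin]
      by (intro measure_degree_bounded_law_le[OF law finB]) (auto simp: ball_verts_def intro: le_SucI)
    moreover have "\<dots> \<le> real M ^ 2 / real (card (verts G))"
      using 2 by (intro divide_right_mono power_mono) auto
    moreover have "measure_pmf.prob p ?E \<le> measure_pmf.prob p ?A"
      using near by (intro measure_pmf_mono_on_support) blast
    ultimately show ?thesis
      by linarith
  qed
qed

lemma measure_pmf_prob_bind_pmf:
  "measure_pmf.prob (bind_pmf p f) X = (\<integral>x. measure_pmf.prob (f x) X \<partial>p)"
proof -
  have "integrable (measure_pmf p) (\<lambda>x. measure_pmf.prob (f x) X)"
    by (rule measure_pmf.integrable_const_bound[where B = 1]) auto
  then have "ennreal (\<integral>x. measure_pmf.prob (f x) X \<partial>p) = (\<integral>\<^sup>+x. ennreal (measure_pmf.prob (f x) X) \<partial>p)"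
    by (simp add: nn_integral_eq_integral)
  also have "\<dots> = (\<integral>\<^sup>+x. emeasure (measure_pmf (f x)) X \<partial>p)"
    by (simp add: measure_pmf.emeasure_eq_measure)
  also have "\<dots> = ennreal (measure_pmf.prob (bind_pmf p f) X)"
    by (simp add: measure_pmf.emeasure_eq_measure[symmetric])
  finally show ?thesis
    by (simp add: integral_nonneg_AE)
qed

lemma measure_pmf_prob_bind_le_const:
  assumes "\<And>x. x \<in> set_pmf p \<Longrightarrow> measure_pmf.prob (f x) X \<le> c"
  shows "measure_pmf.prob (bind_pmf p f) X \<le> c"
  unfolding measure_pmf_prob_bind_pmf
proof (rule measure_pmf.integral_le_const)
  show "integrable (measure_pmf p) (\<lambda>x. measure_pmf.prob (f x) X)"
    by (rule measure_pmf.integrable_const_bound[where B = 1]) auto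
  show "AE x in measure_pmf p. measure_pmf.prob (f x) X \<le> c"
    using assms by (simp add: AE_measure_pmf_iff)
qed

lemma measure_bind_near_small_ball_le:
  fixes L :: "rgraph pmf" and sel :: "graph \<Rightarrow> nat pmf" and N :: nat
  assumes L: "\<And>G u. (G, u) \<in> set_pmf L \<Longrightarrow>
      finite_conn_graph G \<and> u \<in> verts G \<and> degree_bounded_law G (sel G)"
    and N: "0 < N"
  shows "measure_pmf.prob (bind_pmf L (\<lambda>(G, u). map_pmf (\<lambda>v. (G, u, v)) (sel G)))
      {(G, u, v). N < card (verts G) \<and> gdist G v u \<le> K \<and> card (ball_verts G v (2*K+1)) < M}
    \<le> real M ^ 2 / real N"
proof (rule measure_pmf_prob_bind_le_const, clarify)
  fix G u assume Gu: "(G, u) \<in> set_pmf L"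
  have "measure_pmf.prob (sel G)
      {v. N < card (verts G) \<and> gdist G v u \<le> K \<and> card (ball_verts G v (2*K+1)) < M}
      \<le> real M ^ 2 / real N"
  proof (cases "N < card (verts G)")
    case True
    then have "measure_pmf.prob (sel G)
        {v. N < card (verts G) \<and> gdist G v u \<le> K \<and> card (ball_verts G v (2*K+1)) < M}
        \<le> real M ^ 2 / real (card (verts G))"
      using measure_near_small_ball_le[of G u "sel G" K M] L[OF Gu] by simp
    also have "\<dots> \<le> real M ^ 2 / real N"
      using True N by (intro divide_left_mono) auto
    finally show ?thesis .
  qed simp
  then show "measure_pmf.prob (map_pmf (\<lambda>v. (G, u, v)) (sel G))
      {(G, u, v). N < card (verts G) \<and> gdist G v u \<le> K \<and> card (ball_verts G v (2*K+1)) < M}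
      \<le> real M ^ 2 / real N"
    by (simp add: vimage_def)
qed

lemma measure_near_root_le:
  fixes L :: "rgraph pmf" and sel :: "graph \<Rightarrow> nat pmf" and N :: nat
  defines "J \<equiv> bind_pmf L (\<lambda>(G, u). map_pmf (\<lambda>v. (G, u, v)) (sel G))"
  assumes L: "\<And>G u. (G, u) \<in> set_pmf L \<Longrightarrow>
      finite_conn_graph G \<and> u \<in> verts G \<and> degree_bounded_law G (sel G)"
    and N: "0 < N"
  shows "measure_pmf.prob J {(G, u, v). gdist G v u \<le> K}
    \<le> measure_pmf.prob (map_pmf (\<lambda>(G, u, v). (G, v)) J) (ball_card_ge (2*K+1) M)
      + measure_pmf.prob L {(G, u). card (verts G) \<le> N} + real M ^ 2 / real N"
proof -
  define F1 :: "(graph \<times> nat \<times> nat) set" where "F1 = {(G, u, v). (G, v) \<in> ball_card_ge (2*K+1) M}"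
  define F2 :: "(graph \<times> nat \<times> nat) set" where "F2 = {(G, u, v). card (verts G) \<le> N}"
  define F3 :: "(graph \<times> nat \<times> nat) set" where "F3 = {(G, u, v). N < card (verts G) \<and>
      gdist G v u \<le> K \<and> card (ball_verts G v (2*K+1)) < M}"
  have "(G, u, v) \<in> F1 \<union> F2 \<union> F3" if "(G, u, v) \<in> set_pmf J" "gdist G v u \<le> K" for G u v
  proof -
    have Gu: "(G, u) \<in> set_pmf L" "v \<in> set_pmf (sel G)"
      using that by (auto simp: J_def)
    with L[OF Gu(1)] have "(G, v) \<in> RG"
      by (auto simp: degree_bounded_law_def RG_def finite_conn_graph_def locally_finite_def)
    with that(2) show ?thesis
      by (auto simp: F1_def F2_def F3_def ball_card_ge_def)
  qed
  then have "{(G, u, v). gdist G v u \<le> K} \<inter> set_pmf J \<subseteq> F1 \<union> F2 \<union> F3"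
    by auto
  moreover have "measure_pmf.prob J (F1 \<union> F2 \<union> F3)
      \<le> measure_pmf.prob J F1 + measure_pmf.prob J F2 + measure_pmf.prob J F3"
    using measure_Un_le[of "F1 \<union> F2" "measure_pmf J" F3] measure_Un_le[of F1 "measure_pmf J" F2]
    by simp
  ultimately have "measure_pmf.prob J {(G, u, v). gdist G v u \<le> K}
      \<le> measure_pmf.prob J F1 + measure_pmf.prob J F2 + measure_pmf.prob J F3"
    using measure_pmf_mono_on_support by fastforce
  moreover have "measure_pmf.prob J F1
      = measure_pmf.prob (map_pmf (\<lambda>(G, u, v). (G, v)) J) (ball_card_ge (2*K+1) M)"
    unfolding measure_map_pmf F1_def by (rule arg_cong[where f = "measure_pmf.prob J"]) auto
  moreover have "measure_pmf.prob J F2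
      = measure_pmf.prob (map_pmf (\<lambda>(G, u, v). (G, u)) J) {(G, u). card (verts G) \<le> N}"
    unfolding measure_map_pmf F2_def by (rule arg_cong[where f = "measure_pmf.prob J"]) auto
  moreover have "map_pmf (\<lambda>(G, u, v). (G, u)) J = L"
    by (simp add: J_def map_bind_pmf map_pmf_comp case_prod_beta' bind_return_pmf')
  moreover have "measure_pmf.prob J F3 \<le> real M ^ 2 / real N"
    unfolding J_def F3_def using L N by (rule measure_bind_near_small_ball_le)
  ultimately show ?thesis
    by simp
qed

lemma ex_divide_nat_less:
  fixes c e :: real
  assumes "0 < e"
  obtains N :: nat where "0 < N" "c / real N < e"
proof -
  obtain N :: nat where N: "\<bar>c\<bar> / e < real N"
    using reals_Archimedean2 by blast
  moreover have "0 \<le> \<bar>c\<bar> / e"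
    using assms by simp
  ultimately have "0 < N"
    by linarith
  moreover have "\<bar>c\<bar> < e * real N"
    using N assms by (simp add: field_simps)
  then have "c / real N < e"
    using \<open>0 < N\<close> by (simp add: field_simps)
  ultimately show ?thesis
    using that by blast
qed

theorem proposition2p3:
  fixes L :: "nat \<Rightarrow> rgraph pmf"
    and sel :: "graph \<Rightarrow> nat pmf"
    and J :: "nat \<Rightarrow> (graph \<times> nat \<times> nat) pmf"
  assumes finite_conn: "\<And>n. set_pmf (L n) \<subseteq> {(G, u). finite_conn_graph G \<and> u \<in> verts G}"
    and sel_choice: "sel = uniform_vertex \<or> sel = stationary_vertex"
    and J_def: "\<And>n. J n = bind_pmf (L n) (\<lambda>(G, u). map_pmf (\<lambda>v. (G, u, v)) (sel G))"
    and local_conv: "local_conv_dist (\<lambda>n. map_pmf (\<lambda>(G, u, v). (G, v)) (J n))"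
    and size_infty: "\<And>K::nat. (\<lambda>n. measure_pmf.prob (L n) {(G, u). card (verts G) \<le> K}) \<longlonglongrightarrow> 0"
  shows "\<And>K::nat. (\<lambda>n. measure_pmf.prob (J n) {(G, u, v). gdist G v u \<le> K}) \<longlonglongrightarrow> 0"
proof (rule order_tendstoI)
  fix K :: nat and e :: real
  assume "0 < e"
  obtain M where ball: "eventually (\<lambda>n. measure_pmf.prob (map_pmf (\<lambda>(G, u, v). (G, v)) (J n))
      (ball_card_ge (2*K+1) M) < e / 3) sequentially"
    using local_conv_dist_ball_card_tight[OF local_conv, of "e / 3"] \<open>0 < e\<close> by auto
  obtain N :: nat where "0 < N" "real M ^ 2 / real N < e / 3"
    using ex_divide_nat_less[of "e / 3"] \<open>0 < e\<close> by auto
  have size: "eventually (\<lambda>n. measure_pmf.prob (L n) {(G, u). card (verts G) \<le> N} < e / 3) sequentially"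
    using order_tendstoD(2)[OF size_infty[of N], of "e / 3"] \<open>0 < e\<close> by simp
  have bound: "measure_pmf.prob (J n) {(G, u, v). gdist G v u \<le> K}
      \<le> measure_pmf.prob (map_pmf (\<lambda>(G, u, v). (G, v)) (J n)) (ball_card_ge (2*K+1) M)
        + measure_pmf.prob (L n) {(G, u). card (verts G) \<le> N} + real M ^ 2 / real N" for n
    unfolding J_def using finite_conn degree_bounded_law_sel[OF sel_choice] \<open>0 < N\<close>
    by (intro measure_near_root_le) auto
  from ball size show "eventually (\<lambda>n. measure_pmf.prob (J n) {(G, u, v). gdist G v u \<le> K} < e) sequentially"
  proof eventually_elim
    case (elim n)
    then show ?case
      using bound[of n] \<open>real M ^ 2 / real N < e / 3\<close> by linarith
  qed
next
  fix K :: nat and e :: real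
  assume "e < 0"
  then show "eventually (\<lambda>n. e < measure_pmf.prob (J n) {(G, u, v). gdist G v u \<le> K}) sequentially"
    by (simp add: order_less_le_trans)
qed

end
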